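(* Let $\mathbb K$ be a field with $2\in\mathbb K^\times$, $A$ a unital commutative associative $\mathbb K$-algebra, $\mathfrak k$ a $\mathbb K$-Lie algebra, $\mathfrak g=A\otimes\mathfrak k$ and $\mathfrak z$ a vector space. For $i\in\{1,2,3\}$ and a linear map $f_i$ on the $i$-th summand, $f=f_i\circ p_i$ is a 2-cocycle if and only if: ($i=1$) every $\tilde f_1(a,b)$ is an invariant symmetric bilinear map $\mathfrak k\times\mathfrak k\to\mathfrak z$, and the induced alternating map $A\times A\to\mathrm{Lin}(\mathfrak k\vee\mathfrak k',\mathfrak z)^{\mathfrak k}$, $(a,b)\mapsto\tilde f_1(a,b)|_{\mathfrak k\vee\mathfrak k'}$, is a cyclic 1-cocycle; ($i=2$) $\tilde f_2(A)\subseteq Z^2(\mathfrak k,\mathfrak z)$; ($i=3$) $\tilde f_3(c)(x,y)=0$ for all $c\in I_A$, $x\in\mathfrak k$, $y\in\mathfrak k'$.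
   Context: $\mathfrak g$ has bracket $[a\otimes x,a'\otimes x']=aa'\otimes[x,x']$, $ax=a\otimes x$, unit $\mathbf 1$, $\mathfrak k'=[\mathfrak k,\mathfrak k]$. $v\wedge w=\tfrac12(v\otimes w-w\otimes v)$, $v\vee w=\tfrac12(v\otimes w+w\otimes v)$. $I_A$ is the kernel of multiplication $S^2(A)\to A$. The $i$-th summands are $\Lambda^2(A)\otimes S^2(\mathfrak k)$, $A\otimes\Lambda^2(\mathfrak k)$, $I_A\otimes\Lambda^2(\mathfrak k)$, with projections $p_1(ax\wedge by)=a\wedge b\otimes x\vee y$, $p_2(ax\wedge by)=ab\otimes x\wedge y$, $p_3(ax\wedge by)=(a\vee b-ab\vee\mathbf 1)\otimes x\wedge y$ (together an isomorphism from $\Lambda^2(\mathfrak g)$ onto the direct sum). A 2-cocycle is a linear map on $\Lambda^2(\mathfrak g)$ vanishing on the span of $[u,v]\wedge w+[v,w]\wedge u+[w,u]\wedge v$. $\tilde f_1(a,b)(x,y)=f_1(a\wedge b\otimes x\vee y)$, $\tilde f_2(a)(x,y)=f_2(a\otimes x\wedge y)$, $\tilde f_3(c)(x,y)=f_3(c\otimes x\wedge y)$. Invariance: $\kappa([x,y],z)=\kappa(x,[y,z])$. $\mathfrak k\vee\mathfrak k'$ is the span of $x\vee y$, $x\in\mathfrak k$, $y\in\mathfrak k'$; $\mathrm{Lin}(\mathfrak k\vee\mathfrak k',\mathfrak z)^{\mathfrak k}$ the $\mathfrak k$-invariant linear maps on it. A cyclic 1-cocycle is an alternating bilinear $\phi$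 on $A$ with $\phi(a,bc)+\phi(b,ca)+\phi(c,ab)=0$. $Z^2(\mathfrak k,\mathfrak z)$ is the space of alternating bilinear $\eta:\mathfrak k\times\mathfrak k\to\mathfrak z$ with $\eta([x,y],z)+\eta([y,z],x)+\eta([z,x],y)=0$. *)

theory Defs
  imports Complex_Main
begin

definition bilin ::
  "('k::field \<Rightarrow> 'u::ab_group_add \<Rightarrow> 'u) \<Rightarrow> ('k \<Rightarrow> 'v::ab_group_add \<Rightarrow> 'v) \<Rightarrow> ('k \<Rightarrow> 'w::ab_group_add \<Rightarrow> 'w)
    \<Rightarrow> ('u \<Rightarrow> 'v \<Rightarrow> 'w) \<Rightarrow> bool" where
  "bilin s1 s2 s3 B \<longleftrightarrow> (\<forall>y. Vector_Spaces.linear s1 s3 (\<lambda>x. B x y)) \<and> (\<forall>x. Vector_Spaces.linear s2 s3 (\<lambda>y. B x y))"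

definition lie_algebra :: "('k::field \<Rightarrow> 'l::ab_group_add \<Rightarrow> 'l) \<Rightarrow> ('l \<Rightarrow> 'l \<Rightarrow> 'l) \<Rightarrow> bool" where
  "lie_algebra sL br \<longleftrightarrow> vector_space sL \<and> bilin sL sL sL br \<and> (\<forall>x. br x x = 0)
     \<and> (\<forall>x y z. br x (br y z) + br y (br z x) + br z (br x y) = 0)"

definition comm_algebra :: "('k::field \<Rightarrow> 'a::comm_ring_1 \<Rightarrow> 'a) \<Rightarrow> bool" where
  "comm_algebra sA \<longleftrightarrow> vector_space sA \<and> (\<forall>c a b. sA c (a * b) = sA c a * b)"

definition derived :: "('k::field \<Rightarrow> 'l::ab_group_add \<Rightarrow> 'l) \<Rightarrow> ('l \<Rightarrow> 'l \<Rightarrow> 'l) \<Rightarrow> 'l set" where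
  "derived sL br = module.span sL {br x y | x y. True}"

definition invariant :: "('l \<Rightarrow> 'l \<Rightarrow> 'l) \<Rightarrow> ('l \<Rightarrow> 'l \<Rightarrow> 'z) \<Rightarrow> bool" where
  "invariant br \<kappa> \<longleftrightarrow> (\<forall>x y z. \<kappa> (br x y) z = \<kappa> x (br y z))"

definition Z2 :: "('k::field \<Rightarrow> 'l::ab_group_add \<Rightarrow> 'l) \<Rightarrow> ('k \<Rightarrow> 'z::ab_group_add \<Rightarrow> 'z)
    \<Rightarrow> ('l \<Rightarrow> 'l \<Rightarrow> 'l) \<Rightarrow> ('l \<Rightarrow> 'l \<Rightarrow> 'z) set" where
  "Z2 sL sZ br = {\<eta>. bilin sL sL sZ \<eta> \<and> (\<forall>x. \<eta> x x = 0)
      \<and> (\<forall>x y z. \<eta> (br x y) z + \<eta> (br y z) x + \<eta> (br z x) y = 0)}"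

text \<open>A linear map f on \<Lambda>^2(g), g = A \<otimes> k, is determined by its values
  \<Omega> a x b y = f(ax \<and> by) on generators.  f is a 2-cocycle iff it vanishes on
  [u,v]\<and>w + [v,w]\<and>u + [w,u]\<and>v; by trilinearity it suffices (and is necessary) to take
  u = ax, v = by, w = cz, where [ax,by] = (ab)[x,y].\<close>
definition is_2cocycle_gen :: "('l \<Rightarrow> 'l \<Rightarrow> 'l) \<Rightarrow> ('a::comm_ring_1 \<Rightarrow> 'l \<Rightarrow> 'a \<Rightarrow> 'l \<Rightarrow> 'z::ab_group_add) \<Rightarrow> bool" where
  "is_2cocycle_gen br \<Omega> \<longleftrightarrow>
     (\<forall>a b c x y z. \<Omega> (a * b) (br x y) c z + \<Omega> (b * c) (br y z) a x + \<Omega> (c * a) (br z x) b y = 0)"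

text \<open>f_1 : \<Lambda>^2(A) \<otimes> S^2(k) \<rightarrow> z, encoded by F1 a b x y = f_1(a\<and>b \<otimes> x\<or>y) = ~f_1(a,b)(x,y).\<close>
definition summand1_map :: "('k::field \<Rightarrow> 'a::comm_ring_1 \<Rightarrow> 'a) \<Rightarrow> ('k \<Rightarrow> 'l::ab_group_add \<Rightarrow> 'l) \<Rightarrow> ('k \<Rightarrow> 'z::ab_group_add \<Rightarrow> 'z) \<Rightarrow> ('a \<Rightarrow> 'a \<Rightarrow> 'l \<Rightarrow> 'l \<Rightarrow> 'z) \<Rightarrow> bool" where
  "summand1_map sA sL sZ (F1 :: 'a::comm_ring_1 \<Rightarrow> 'a \<Rightarrow> 'l::ab_group_add \<Rightarrow> 'l \<Rightarrow> 'z::ab_group_add) \<longleftrightarrow>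
     (\<forall>x y. bilin sA sA sZ (\<lambda>a b. F1 a b x y)) \<and> (\<forall>a b. bilin sL sL sZ (F1 a b))
     \<and> (\<forall>a x y. F1 a a x y = 0) \<and> (\<forall>a b x y. F1 a b x y = F1 a b y x)"

text \<open>f_2 : A \<otimes> \<Lambda>^2(k) \<rightarrow> z, encoded by F2 a x y = f_2(a \<otimes> x\<and>y) = ~f_2(a)(x,y).\<close>
definition summand2_map :: "('k::field \<Rightarrow> 'a::comm_ring_1 \<Rightarrow> 'a) \<Rightarrow> ('k \<Rightarrow> 'l::ab_group_add \<Rightarrow> 'l) \<Rightarrow> ('k \<Rightarrow> 'z::ab_group_add \<Rightarrow> 'z) \<Rightarrow> ('a \<Rightarrow> 'l \<Rightarrow> 'l \<Rightarrow> 'z) \<Rightarrow> bool" where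
  "summand2_map sA sL sZ (F2 :: 'a::comm_ring_1 \<Rightarrow> 'l::ab_group_add \<Rightarrow> 'l \<Rightarrow> 'z::ab_group_add) \<longleftrightarrow>
     (\<forall>x y. Vector_Spaces.linear sA sZ (\<lambda>a. F2 a x y)) \<and> (\<forall>a. bilin sL sL sZ (F2 a))
     \<and> (\<forall>a x. F2 a x x = 0)"

text \<open>f_3 : I_A \<otimes> \<Lambda>^2(k) \<rightarrow> z, encoded through an (always existing) linear extension
  to S^2(A) \<otimes> \<Lambda>^2(k), given by G a b x y = f_3(a\<or>b \<otimes> x\<and>y).\<close>
definition summand3_ext :: "('k::field \<Rightarrow> 'a::comm_ring_1 \<Rightarrow> 'a) \<Rightarrow> ('k \<Rightarrow> 'l::ab_group_add \<Rightarrow> 'l) \<Rightarrow> ('k \<Rightarrow> 'z::ab_group_add \<Rightarrow> 'z) \<Rightarrow> ('a \<Rightarrow> 'a \<Rightarrow> 'l \<Rightarrow> 'l \<Rightarrow> 'z) \<Rightarrow> bool" where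
  "summand3_ext sA sL sZ (G :: 'a::comm_ring_1 \<Rightarrow> 'a \<Rightarrow> 'l::ab_group_add \<Rightarrow> 'l \<Rightarrow> 'z::ab_group_add) \<longleftrightarrow>
     (\<forall>x y. bilin sA sA sZ (\<lambda>a b. G a b x y)) \<and> (\<forall>a b. bilin sL sL sZ (G a b))
     \<and> (\<forall>a b x y. G a b x y = G b a x y) \<and> (\<forall>a b x. G a b x x = 0)"

end

theory Submission
  imports Defs
begin

(* Specialise the cocycle identity to generators ax, by, cz, where [ax,by] = ab[x,y], and take one
   algebra element equal to 1: this gives an identity between values for fixed a, b. On the first
   summand, compared with its image under swapping two Lie algebra arguments and divided by 2, it
   makes each f1(a,b) cyclically invariant, which for symmetric forms is invariance; on the third
   it makes (x,y,z) |-> f3((a v b - ab v 1) (x) [x,y] ^ z) skew under cyclic permutations, hence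
   zero. Afterwards the full identity only involves values at (z,[x,y]), and vanishing on brackets
   extends to k' by linearity. Finally, a map g on S^2(A) vanishes on I_A exactly when
   g(a v b) = g(ab v 1). *)

lemma (in vector_space) eq_neg_self_imp_0:
  fixes x :: 'b
  assumes "(2::'a) \<noteq> 0" and "x = - x"
  shows "x = 0"
proof -
  have "scale 2 x = x + x"
    by (metis one_add_one scale_left_distrib scale_one)
  also have "\<dots> = 0"
    using \<open>x = - x\<close> by (metis add.right_inverse)
  finally show ?thesis
    using assms(1) by simp
qed

lemma (in vector_space) cyclic_skew_eq_0:
  fixes t :: "'c \<Rightarrow> 'c \<Rightarrow> 'c \<Rightarrow> 'b"
  assumes "(2::'a) \<noteq> 0" and skew: "\<And>x y z. t y z x = - t x y z"
  shows "t x y z = 0"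
proof (rule eq_neg_self_imp_0[OF assms(1)])
  have "t x y z = - t z x y" by (rule skew)
  also have "t z x y = - t y z x" by (rule skew)
  also have "t y z x = - t x y z" by (rule skew)
  finally show "t x y z = - t x y z" unfolding minus_minus .
qed

lemma bilin_linear_left: "bilin s1 s2 s3 B \<Longrightarrow> Vector_Spaces.linear s1 s3 (\<lambda>x. B x y)"
  by (simp add: bilin_def)

lemma bilin_linear_right: "bilin s1 s2 s3 B \<Longrightarrow> Vector_Spaces.linear s2 s3 (B x)"
  by (simp add: bilin_def)

lemma bilin_add_left: "bilin s1 s2 s3 B \<Longrightarrow> B (x + x') y = B x y + B x' y"
  using module_hom.add[OF module_hom_linearI[OF bilin_linear_left]] .

lemma bilin_add_right: "bilin s1 s2 s3 B \<Longrightarrow> B x (y + y') = B x y + B x y'"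
  using module_hom.add[OF module_hom_linearI[OF bilin_linear_right]] .

lemma bilin_minus_left: "bilin s1 s2 s3 B \<Longrightarrow> B (- x) y = - B x y"
  using module_hom.neg[OF module_hom_linearI[OF bilin_linear_left]] .

lemma bilin_antisym:
  assumes B: "bilin s1 s1 s2 B" and alt: "\<And>x. B x x = 0"
  shows "B y x = - B x y"
proof -
  have "0 = B (x + y) (x + y)"
    using alt by simp
  also have "\<dots> = B x x + B x y + (B y x + B y y)"
    using B by (simp add: bilin_add_left bilin_add_right)
  finally show ?thesis
    using alt by (simp add: eq_neg_iff_add_eq_0 add.commute)
qed

lemma linear_add_fun:
  "Vector_Spaces.linear s1 s2 f \<Longrightarrow> Vector_Spaces.linear s1 s2 g \<Longrightarrow>
    Vector_Spaces.linear s1 s2 (\<lambda>x. f x + g x)"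
  by (metis vector_space_pair.linear_compose_add vector_space_pair_def Vector_Spaces.linear_iff)

lemma linear_diff_fun:
  "Vector_Spaces.linear s1 s2 f \<Longrightarrow> Vector_Spaces.linear s1 s2 g \<Longrightarrow>
    Vector_Spaces.linear s1 s2 (\<lambda>x. f x - g x)"
  by (metis vector_space_pair.linear_compose_sub vector_space_pair_def Vector_Spaces.linear_iff)

lemma lie_algebra_bracket_antisym: "lie_algebra sL br \<Longrightarrow> br y x = - br x y"
  unfolding lie_algebra_def by (auto intro: bilin_antisym)

lemma linear_vanishes_on_derived_iff:
  assumes f: "Vector_Spaces.linear sL sZ f"
  shows "(\<forall>y \<in> derived sL br. f y = 0) \<longleftrightarrow> (\<forall>u v. f (br u v) = 0)"
proof
  have "module sL"
    using f by (simp add: Vector_Spaces.linear_iff module_iff_vector_space)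
  then show "\<forall>y \<in> derived sL br. f y = 0 \<Longrightarrow> \<forall>u v. f (br u v) = 0"
    unfolding derived_def by (auto intro: module.span_base)
next
  assume brackets: "\<forall>u v. f (br u v) = 0"
  show "\<forall>y \<in> derived sL br. f y = 0"
    unfolding derived_def
    using module_hom.eq_0_on_span[OF module_hom_linearI[OF f], of "{br u v |u v. True}"] brackets
    by auto
qed

definition cyclic_invariant :: "('l \<Rightarrow> 'l \<Rightarrow> 'l) \<Rightarrow> ('l \<Rightarrow> 'l \<Rightarrow> 'z) \<Rightarrow> bool" where
  "cyclic_invariant br \<kappa> \<longleftrightarrow> (\<forall>x y z. \<kappa> (br x y) z = \<kappa> (br y z) x)"

lemma invariant_iff_cyclic_invariant:
  assumes sym: "\<And>x y. \<kappa> x y = \<kappa> y x"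
  shows "invariant br \<kappa> \<longleftrightarrow> cyclic_invariant br \<kappa>"
  unfolding invariant_def cyclic_invariant_def using sym[of _ "br _ _"] by metis

lemma vanishes_on_mult_kernel_iff:
  fixes g :: "'a::comm_ring_1 \<Rightarrow> 'a \<Rightarrow> 'z::ab_group_add"
  assumes add: "\<And>a a' b. g (a + a') b = g a b + g a' b"
  shows "(\<forall>ps. (\<Sum>(a, b)\<leftarrow>ps. a * b) = 0 \<longrightarrow> (\<Sum>(a, b)\<leftarrow>ps. g a b) = 0) \<longleftrightarrow>
    (\<forall>a b. g a b = g (a * b) 1)"
proof -
  have additive: "additive (\<lambda>a. g a b)" for b
    by unfold_locales (rule add)
  show ?thesis
  proof
    assume kernel: "\<forall>ps. (\<Sum>(a, b)\<leftarrow>ps. a * b) = 0 \<longrightarrow> (\<Sum>(a, b)\<leftarrow>ps. g a b) = 0"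
    show "\<forall>a b. g a b = g (a * b) 1"
    proof (intro allI)
      fix a b
      have "g a b + g (- (a * b)) 1 = 0"
        using kernel[rule_format, of "[(a, b), (- (a * b), 1)]"] by simp
      then show "g a b = g (a * b) 1"
        using additive.minus[OF additive] by (simp add: add_eq_0_iff)
    qed
  next
    assume factors: "\<forall>a b. g a b = g (a * b) 1"
    have "(\<Sum>(a, b)\<leftarrow>ps. g a b) = g (\<Sum>(a, b)\<leftarrow>ps. a * b) 1" for ps
    proof (induction ps)
      case (Cons p ps)
      obtain a b where "p = (a, b)"
        by fastforce
      with Cons.IH show ?case
        by (simp add: add factors[rule_format, of a b])
    qed (simp add: additive.zero[OF additive])
    then show "\<forall>ps. (\<Sum>(a, b)\<leftarrow>ps. a * b) = 0 \<longrightarrow> (\<Sum>(a, b)\<leftarrow>ps. g a b) = 0"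
      by (simp add: additive.zero[OF additive])
  qed
qed

lemma is_2cocycle_gen_symmetric_iff:
  fixes sZ :: "'k::field \<Rightarrow> 'z::ab_group_add \<Rightarrow> 'z"
    and K :: "'a::comm_ring_1 \<Rightarrow> 'a \<Rightarrow> 'l \<Rightarrow> 'l \<Rightarrow> 'z"
  assumes Z: "vector_space sZ" and two: "(2::'k) \<noteq> 0"
    and sym: "\<And>a b. K a b = K b a" and unit: "\<And>a x y. K a 1 x y = 0"
  shows "is_2cocycle_gen br (\<lambda>a x b y. K a b x y) \<longleftrightarrow> (\<forall>a b x y z. K a b (br x y) z = 0)"
proof
  assume cocycle: "is_2cocycle_gen br (\<lambda>a x b y. K a b x y)"
  show "\<forall>a b x y z. K a b (br x y) z = 0"
  proof (intro allI)
    fix a b x y z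
    have "K a b (br y z) x = - K a b (br x y) z" for x y z
      using cocycle[unfolded is_2cocycle_gen_def, rule_format, of a 1 b x y z]
      by (simp add: sym[of b a] unit eq_neg_iff_add_eq_0 add.commute)
    then show "K a b (br x y) z = 0"
      by (rule vector_space.cyclic_skew_eq_0[OF Z two])
  qed
qed (simp add: is_2cocycle_gen_def)

lemma is_2cocycle_gen_summand1_imp_cyclic_invariant:
  fixes sA :: "'k::field \<Rightarrow> 'a::comm_ring_1 \<Rightarrow> 'a"
    and sL :: "'k \<Rightarrow> 'l::ab_group_add \<Rightarrow> 'l"
    and sZ :: "'k \<Rightarrow> 'z::ab_group_add \<Rightarrow> 'z"
  assumes two: "(2::'k) \<noteq> 0" and L: "lie_algebra sL br" and Z: "vector_space sZ"
    and S: "summand1_map sA sL sZ F" and cocycle: "is_2cocycle_gen br (\<lambda>a x b y. F a b x y)"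
  shows "cyclic_invariant br (F a b)"
  unfolding cyclic_invariant_def
proof (intro allI)
  fix x y z
  have antisym_A: "F b a u v = - F a b u v" for a b u v
    by (rule bilin_antisym[of sA sZ "\<lambda>a b. F a b u v"]) (use S in \<open>simp_all add: summand1_map_def\<close>)
  have bilin_L: "bilin sL sL sZ (F a b)" for a b
    using S by (simp add: summand1_map_def)
  have minus_left: "F a b (- u) v = - F a b u v" for a b u v
    using bilin_L by (rule bilin_minus_left)
  have bracket_antisym: "br v u = - br u v" for u v
    using lie_algebra_bracket_antisym[OF L] .
  have cocycle_at: "F (a * b) c (br x y) z + F (b * c) a (br y z) x + F (c * a) b (br z x) y = 0"
    for a b c x y z
    using cocycle by (simp add: is_2cocycle_gen_def)
  define d where "d = F a b (br x y) z - F a b (br y z) x"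
  have "F (a * b) 1 (br z x) y = d"
    using cocycle_at[of a b 1 z x y] by (simp add: d_def antisym_A[of b a] algebra_simps)
  moreover have "F (a * b) 1 (br z x) y = - d"
    using cocycle_at[of a b 1 x z y]
    by (simp add: d_def antisym_A[of b a] bracket_antisym[of x z] bracket_antisym[of z y]
        bracket_antisym[of y x] minus_left algebra_simps)
  ultimately have "d = 0"
    by (intro vector_space.eq_neg_self_imp_0[OF Z two]) simp
  then show "F a b (br x y) z = F a b (br y z) x"
    by (simp add: d_def)
qed

lemma is_2cocycle_gen_summand1_iff_cyclic_1_cocycle:
  fixes sA :: "'k::field \<Rightarrow> 'a::comm_ring_1 \<Rightarrow> 'a"
  assumes S: "summand1_map sA sL sZ F"
    and cyclic: "\<And>a b. cyclic_invariant br (F a b)"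
  shows "is_2cocycle_gen br (\<lambda>a x b y. F a b x y) \<longleftrightarrow>
    (\<forall>a b c x u v. F a (b * c) x (br u v) + F b (c * a) x (br u v) + F c (a * b) x (br u v) = 0)"
proof -
  have antisym_A: "F b a u v = - F a b u v" for a b u v
    by (rule bilin_antisym[of sA sZ "\<lambda>a b. F a b u v"]) (use S in \<open>simp_all add: summand1_map_def\<close>)
  have sym_L: "F a b u v = F a b v u" for a b u v
    using S by (simp add: summand1_map_def)
  have cyclic_at: "F a b (br x y) z = F a b (br y z) x" for a b x y z
    using cyclic[of a b] unfolding cyclic_invariant_def by blast
  have "F (a * b) c (br x y) z + F (b * c) a (br y z) x + F (c * a) b (br z x) y
      = - (F a (b * c) z (br x y) + F b (c * a) z (br x y) + F c (a * b) z (br x y))" for a b c x y z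
  proof -
    have "F (b * c) a (br y z) x = F (b * c) a (br x y) z" and "F (c * a) b (br z x) y = F (c * a) b (br x y) z"
      using cyclic_at[of _ _ x y z] cyclic_at[of _ _ z x y] by simp_all
    then show ?thesis
      unfolding antisym_A[of c "a * b"] antisym_A[of a "b * c"] antisym_A[of b "c * a"] sym_L[of _ _ z]
      by simp
  qed
  then show ?thesis
    unfolding is_2cocycle_gen_def by (metis neg_equal_0_iff_equal)
qed

lemma is_2cocycle_gen_summand1_iff:
  fixes sA :: "'k::field \<Rightarrow> 'a::comm_ring_1 \<Rightarrow> 'a"
    and sL :: "'k \<Rightarrow> 'l::ab_group_add \<Rightarrow> 'l"
    and sZ :: "'k \<Rightarrow> 'z::ab_group_add \<Rightarrow> 'z"
  assumes two: "(2::'k) \<noteq> 0" and L: "lie_algebra sL br" and Z: "vector_space sZ"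
    and S: "summand1_map sA sL sZ F"
  shows "is_2cocycle_gen br (\<lambda>a x b y. F a b x y) \<longleftrightarrow>
      (\<forall>a b. bilin sL sL sZ (F a b) \<and> (\<forall>x y. F a b x y = F a b y x) \<and> invariant br (F a b))
    \<and> (\<forall>a b c x y. y \<in> derived sL br \<longrightarrow>
        F a (b * c) x y + F b (c * a) x y + F c (a * b) x y = 0)"
    (is "?cocycle \<longleftrightarrow> ?forms \<and> ?cyclic_on_derived")
proof -
  have bilin_L: "bilin sL sL sZ (F a b)" and sym_L: "F a b x y = F a b y x" for a b x y
    using S by (simp_all add: summand1_map_def)
  have invariant_iff: "invariant br (F a b) \<longleftrightarrow> cyclic_invariant br (F a b)" for a b
    using sym_L by (rule invariant_iff_cyclic_invariant)
  have "(\<forall>y \<in> derived sL br. F a (b * c) x y + F b (c * a) x y + F c (a * b) x y = 0) \<longleftrightarrow>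
      (\<forall>u v. F a (b * c) x (br u v) + F b (c * a) x (br u v) + F c (a * b) x (br u v) = 0)"
    for a b c x
    by (intro linear_vanishes_on_derived_iff[of sL sZ] linear_add_fun bilin_linear_right[OF bilin_L])
  then have derived_iff: "?cyclic_on_derived \<longleftrightarrow>
      (\<forall>a b c x u v. F a (b * c) x (br u v) + F b (c * a) x (br u v) + F c (a * b) x (br u v) = 0)"
    by blast
  show ?thesis
  proof
    assume ?cocycle
    then have cyclic: "cyclic_invariant br (F a b)" for a b
      using two L Z S by (intro is_2cocycle_gen_summand1_imp_cyclic_invariant)
    then have ?forms
      using bilin_L sym_L invariant_iff by blast
    moreover have ?cyclic_on_derived
      using \<open>?cocycle\<close> derived_iff is_2cocycle_gen_summand1_iff_cyclic_1_cocycle[OF S cyclic] by simp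
    ultimately show "?forms \<and> ?cyclic_on_derived" ..
  next
    assume conditions: "?forms \<and> ?cyclic_on_derived"
    then have cyclic: "cyclic_invariant br (F a b)" for a b
      using invariant_iff by blast
    show ?cocycle
      using conditions derived_iff is_2cocycle_gen_summand1_iff_cyclic_1_cocycle[OF S cyclic] by simp
  qed
qed

lemma is_2cocycle_gen_summand2_iff:
  assumes S: "summand2_map sA sL sZ F2"
  shows "is_2cocycle_gen br (\<lambda>a x b y. F2 (a * b) x y) \<longleftrightarrow> (\<forall>a. F2 a \<in> Z2 sL sZ br)"
proof -
  have "is_2cocycle_gen br (\<lambda>a x b y. F2 (a * b) x y) \<longleftrightarrow>
      (\<forall>a b c x y z. F2 (a * b * c) (br x y) z + F2 (a * b * c) (br y z) x + F2 (a * b * c) (br z x) y = 0)"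
    unfolding is_2cocycle_gen_def by (simp add: ac_simps)
  also have "\<dots> \<longleftrightarrow> (\<forall>a x y z. F2 a (br x y) z + F2 a (br y z) x + F2 a (br z x) y = 0)"
  proof
    assume "\<forall>a b c x y z. F2 (a * b * c) (br x y) z + F2 (a * b * c) (br y z) x + F2 (a * b * c) (br z x) y = 0"
    from this[rule_format, of _ 1 1] show "\<forall>a x y z. F2 a (br x y) z + F2 a (br y z) x + F2 a (br z x) y = 0"
      by simp
  qed simp
  also have "\<dots> \<longleftrightarrow> (\<forall>a. F2 a \<in> Z2 sL sZ br)"
    using S by (simp add: Z2_def summand2_map_def)
  finally show ?thesis .
qed

lemma is_2cocycle_gen_summand3_iff:
  fixes sA :: "'k::field \<Rightarrow> 'a::comm_ring_1 \<Rightarrow> 'a"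
    and sL :: "'k \<Rightarrow> 'l::ab_group_add \<Rightarrow> 'l"
    and sZ :: "'k \<Rightarrow> 'z::ab_group_add \<Rightarrow> 'z"
  assumes two: "(2::'k) \<noteq> 0" and Z: "vector_space sZ" and S: "summand3_ext sA sL sZ G"
  shows "is_2cocycle_gen br (\<lambda>a x b y. G a b x y - G (a * b) 1 x y) \<longleftrightarrow>
    (\<forall>ps :: ('a \<times> 'a) list. (\<Sum>(a, b)\<leftarrow>ps. a * b) = 0 \<longrightarrow>
      (\<forall>x y. y \<in> derived sL br \<longrightarrow> (\<Sum>(a, b)\<leftarrow>ps. G a b x y) = 0))"
proof -
  define K where "K a b x y = G a b x y - G (a * b) 1 x y" for a b x y
  have bilin_A: "bilin sA sA sZ (\<lambda>a b. G a b x y)" and bilin_L: "bilin sL sL sZ (G a b)" for a b x y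
    using S by (simp_all add: summand3_ext_def)
  have antisym_G: "G a b x y = - G a b y x" for a b x y
    by (rule bilin_antisym[OF bilin_L]) (use S in \<open>simp add: summand3_ext_def\<close>)
  have antisym_K: "K a b y x = - K a b x y" for a b x y
    by (simp add: K_def antisym_G[of a b y x] antisym_G[of "a * b" 1 y x])
  have sym_K: "K a b = K b a" for a b
    using S by (simp add: K_def summand3_ext_def mult.commute fun_eq_iff)
  have unit_K: "K a 1 x y = 0" for a x y
    by (simp add: K_def)
  have linear_K: "Vector_Spaces.linear sL sZ (K a b x)" for a b x
    unfolding K_def by (intro linear_diff_fun bilin_linear_right[OF bilin_L])
  have "is_2cocycle_gen br (\<lambda>a x b y. G a b x y - G (a * b) 1 x y) \<longleftrightarrow>
      (\<forall>a b x y z. K a b (br x y) z = 0)"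
    using is_2cocycle_gen_symmetric_iff[OF Z two, of K, OF sym_K unit_K] by (simp add: K_def)
  also have "\<dots> \<longleftrightarrow> (\<forall>a b x. \<forall>y \<in> derived sL br. K a b x y = 0)"
    using linear_vanishes_on_derived_iff[OF linear_K] by (metis antisym_K neg_equal_0_iff_equal)
  also have "\<dots> \<longleftrightarrow> (\<forall>x. \<forall>y \<in> derived sL br. \<forall>a b. G a b x y = G (a * b) 1 x y)"
    by (auto simp: K_def)
  also have "\<dots> \<longleftrightarrow> (\<forall>x. \<forall>y \<in> derived sL br. \<forall>ps :: ('a \<times> 'a) list.
      (\<Sum>(a, b)\<leftarrow>ps. a * b) = 0 \<longrightarrow> (\<Sum>(a, b)\<leftarrow>ps. G a b x y) = 0)"
    using vanishes_on_mult_kernel_iff[of "\<lambda>a b. G a b x y" for x y] bilin_add_left[OF bilin_A]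
    by simp
  finally show ?thesis
    by blast
qed

theorem corollary3p3:
  fixes sA :: "'k::field \<Rightarrow> 'a::comm_ring_1 \<Rightarrow> 'a"
    and sL :: "'k \<Rightarrow> 'l::ab_group_add \<Rightarrow> 'l"
    and sZ :: "'k \<Rightarrow> 'z::ab_group_add \<Rightarrow> 'z"
    and br :: "'l \<Rightarrow> 'l \<Rightarrow> 'l"
  assumes two: "(2::'k) \<noteq> 0"
    and A: "comm_algebra sA"
    and L: "lie_algebra sL br"
    and Z: "vector_space sZ"
  shows
   "(\<forall>F1. summand1_map sA sL sZ F1 \<longrightarrow>
       (is_2cocycle_gen br (\<lambda>a x b y. F1 a b x y) \<longleftrightarrow>
          (\<forall>a b. bilin sL sL sZ (F1 a b) \<and> (\<forall>x y. F1 a b x y = F1 a b y x) \<and> invariant br (F1 a b))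
        \<and> (\<forall>a b c x y. y \<in> derived sL br \<longrightarrow>
              F1 a (b * c) x y + F1 b (c * a) x y + F1 c (a * b) x y = 0)))
  \<and> (\<forall>F2. summand2_map sA sL sZ F2 \<longrightarrow>
       (is_2cocycle_gen br (\<lambda>a x b y. F2 (a * b) x y) \<longleftrightarrow>
          (\<forall>a. F2 a \<in> Z2 sL sZ br)))
  \<and> (\<forall>G. summand3_ext sA sL sZ G \<longrightarrow>
       (is_2cocycle_gen br (\<lambda>a x b y. G a b x y - G (a * b) 1 x y) \<longleftrightarrow>
          (\<forall>ps :: ('a \<times> 'a) list. (\<Sum>(a, b)\<leftarrow>ps. a * b) = 0 \<longrightarrow>
             (\<forall>x y. y \<in> derived sL br \<longrightarrow> (\<Sum>(a, b)\<leftarrow>ps. G a b x y) = 0))))"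
  by (simp add: is_2cocycle_gen_summand1_iff[OF two L Z] is_2cocycle_gen_summand2_iff
      is_2cocycle_gen_summand3_iff[OF two Z])

end
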